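(* Let $R=\mathbb{C}[u]/(u^2)$ and let $\mathcal{A}=(A_1,\dots,A_4)$ be a quadruple of $5\times5$ alternating matrices with entries $a^{(k)}_{ij}\in R$. Suppose the closed subscheme of $\mathbb{P}^3_R$ cut out by the five $4\times4$ principal sub-Pfaffians of $\mathcal{A}(\mathbf{x})=\sum_kA_kx_k$ has Zariski tangent space of dimension at least $2$ at a point $p$ (lying over $u=0$). Then there exists $\gamma\in U_4(\mathbb{C})\times U_5(\mathbb{C})$ such that either $\gamma(\mathcal{A})$ is in normal form of type $(K)$ for some $1\le K\le4$, or $\gamma(\mathcal{A})$ is in normal form of type $(I,J,K)$ for some $1\le I<J\le5$, $1\le K\le4$.
   Context: $U_n\subset\mathrm{GL}_n$ is the subgroup of lower triangular unipotent matrices, acting on quadruples by $A_k\mapsto\sum_l(g_4)_{kl}A_l$ and $A_k\mapsto g_5A_kg_5^t$. For $a\in R$, $a\equiv0\pmod u$ means $a\in uR$ and $a\equiv0\pmod{u^2}$ means $a=0$. A quadruple is in normal form of type $(K)$ if every entry of $A_K$ is $\equiv0\pmod u$. It is in normal form of type $(I,J,K)$ ($1\le I<J\le5$, $1\le K\le4$) if $a^{(k)}_{IJ}\equiv0\pmod u$ for all $k$; $a^{(K)}_{Ij}\equiv0\pmod u$ for all $j$; $a^{(K)}_{iJ}\equiv0\pmod u$ for all $i$; and $a^{(K)}_{IJ}\equiv0\pmod{u^2}$. *)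

theory Defs
  imports "HOL-Analysis.Analysis" "HOL-Computational_Algebra.Polynomial" "HOL-Library.Function_Algebras"
begin

text \<open>Elements of R = C[u]/(u^2) are encoded as pairs (a0, a1) standing for a0 + a1 u.
  A quadruple of 5x5 matrices over R is a function A k i j (k in 1..4, i,j in 1..5).\<close>

type_synonym ringR = "complex \<times> complex"
type_synonym quadR = "nat \<Rightarrow> nat \<Rightarrow> nat \<Rightarrow> ringR"

definition alternating_quad :: "quadR \<Rightarrow> bool" where
  "alternating_quad A \<longleftrightarrow>
     (\<forall>k\<in>{1..4}. \<forall>i\<in>{1..5}. \<forall>j\<in>{1..5}. A k i j = (- fst (A k j i), - snd (A k j i)))"

definition pf4 :: "(nat \<Rightarrow> nat \<Rightarrow> 'a::comm_ring_1) \<Rightarrow> nat \<Rightarrow> nat \<Rightarrow> nat \<Rightarrow> nat \<Rightarrow> 'a" where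
  "pf4 M a b c d = M a b * M c d - M a c * M b d + M a d * M b c"

definition subpf :: "(nat \<Rightarrow> nat \<Rightarrow> 'a::comm_ring_1) \<Rightarrow> nat \<Rightarrow> 'a" where
  "subpf M i = (let l = filter (\<lambda>j. j \<noteq> i) [1..<6] in pf4 M (l!0) (l!1) (l!2) (l!3))"

definition red0 :: "quadR \<Rightarrow> nat \<Rightarrow> nat \<Rightarrow> nat \<Rightarrow> complex" where
  "red0 A k i j = fst (A k i j)"

definition evalA0 :: "quadR \<Rightarrow> (nat \<Rightarrow> complex) \<Rightarrow> nat \<Rightarrow> nat \<Rightarrow> complex" where
  "evalA0 A x i j = (\<Sum>k=1..4. red0 A k i j * x k)"

definition on_X :: "quadR \<Rightarrow> (nat \<Rightarrow> complex) \<Rightarrow> bool" where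
  "on_X A p \<longleftrightarrow> (\<exists>k\<in>{1..4}. p k \<noteq> 0) \<and> (\<forall>i\<in>{1..5}. subpf (evalA0 A p) i = 0)"

text \<open>Evaluation of A(x) at a C[eps]-valued point (eps^2 = 0, eps the variable of a complex
  polynomial): the structure map R -> C[eps] sends u to t*eps, and x_k to p_k + eps*w_k.\<close>
definition evalA_dual :: "quadR \<Rightarrow> complex \<Rightarrow> (nat \<Rightarrow> complex) \<Rightarrow> (nat \<Rightarrow> complex)
    \<Rightarrow> nat \<Rightarrow> nat \<Rightarrow> complex poly" where
  "evalA_dual A t p w i j = (\<Sum>k=1..4. [:fst (A k i j), t * snd (A k i j):] * [:p k, w k:])"

text \<open>Tangent vectors to the affine cone: v 0 = t (the u-direction), v 1..v 4 = w,
  all other coordinates 0; the condition is that all sub-Pfaffians vanish mod eps^2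
  (the constant terms vanish because p is on X).\<close>
definition tangent_cone :: "quadR \<Rightarrow> (nat \<Rightarrow> complex) \<Rightarrow> (nat \<Rightarrow> complex) set" where
  "tangent_cone A p = {v. (\<forall>i>4. v i = 0) \<and>
      (\<forall>i\<in>{1..5}. coeff (subpf (evalA_dual A (v 0) p v) i) 0 = 0
                 \<and> coeff (subpf (evalA_dual A (v 0) p v) i) 1 = 0)}"

definition cscale :: "complex \<Rightarrow> (nat \<Rightarrow> complex) \<Rightarrow> (nat \<Rightarrow> complex)" where
  "cscale c v = (\<lambda>i. c * v i)"

text \<open>Zariski tangent space of X at p: the C[eps]-points of X over p, modulo the
  direction (0,p) coming from rescaling homogeneous coordinates by units of C[eps].\<close>
definition zariski_tangent_dim :: "quadR \<Rightarrow> (nat \<Rightarrow> complex) \<Rightarrow> nat" where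
  "zariski_tangent_dim A p = vector_space.dim cscale (tangent_cone A p) - 1"

definition unipotent_lower :: "nat \<Rightarrow> (nat \<Rightarrow> nat \<Rightarrow> complex) \<Rightarrow> bool" where
  "unipotent_lower n g \<longleftrightarrow>
     (\<forall>i\<in>{1..n}. g i i = 1) \<and> (\<forall>i\<in>{1..n}. \<forall>j\<in>{1..n}. i < j \<longrightarrow> g i j = 0)"

definition act :: "(nat \<Rightarrow> nat \<Rightarrow> complex) \<Rightarrow> (nat \<Rightarrow> nat \<Rightarrow> complex) \<Rightarrow> quadR \<Rightarrow> quadR" where
  "act g4 g5 A k i j =
     ((\<Sum>l=1..4. g4 k l * (\<Sum>a=1..5. \<Sum>b=1..5. g5 i a * fst (A l a b) * g5 j b)),
      (\<Sum>l=1..4. g4 k l * (\<Sum>a=1..5. \<Sum>b=1..5. g5 i a * snd (A l a b) * g5 j b)))"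

text \<open>a == 0 mod u  iff  fst a = 0;  a == 0 mod u^2  iff  a = 0.\<close>
definition normal_form_K :: "quadR \<Rightarrow> nat \<Rightarrow> bool" where
  "normal_form_K A K \<longleftrightarrow> (\<forall>i\<in>{1..5}. \<forall>j\<in>{1..5}. fst (A K i j) = 0)"

definition normal_form_IJK :: "quadR \<Rightarrow> nat \<Rightarrow> nat \<Rightarrow> nat \<Rightarrow> bool" where
  "normal_form_IJK A I J K \<longleftrightarrow>
     (\<forall>k\<in>{1..4}. fst (A k I J) = 0) \<and>
     (\<forall>j\<in>{1..5}. fst (A K I j) = 0) \<and>
     (\<forall>i\<in>{1..5}. fst (A K i J) = 0) \<and>
     A K I J = (0, 0)"

end

theory Submission
  imports Defs
begin

text \<open>At the point \<open>p\<close> the reduction \<open>M = A(p) mod u\<close> is a skew \<open>5 \<times> 5\<close> matrix whose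
  \<open>4 \<times> 4\<close> sub-Pfaffians vanish, so it has rank at most two. Choosing the row of \<open>g4\<close> through \<open>p\<close>
  makes \<open>A_K \<equiv> A(p)\<close> up to a unit. If \<open>M = 0\<close> this is the normal form of type \<open>(K)\<close>.
  Otherwise \<open>M\<close> has rank two with three-dimensional kernel \<open>W\<close>. A tangent vector \<open>(t, w)\<close>
  makes the first-order parts of the sub-Pfaffians vanish, and this says exactly that the skew
  form \<open>\<Sum> w_l A_l + t A(p)_u\<close> (reduced mod \<open>u\<close>) vanishes on \<open>W\<close>. These are three linear
  conditions on a tangent space of dimension at least three, so they are dependent: some nonzero
  \<open>\<omega> \<in> \<Lambda>\<^sup>2 W\<close> pairs to zero with every \<open>A_l\<close> and with \<open>A(p)_u\<close>. Every bivector in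
  dimension three is decomposable, \<open>\<omega> = r \<wedge> s\<close>, and bringing the plane \<open>\<langle>r, s\<rangle>\<close> into
  echelon form gives two rows \<open>I < J\<close> of a unipotent \<open>g5\<close> realising the normal form
  \<open>(I, J, K)\<close>.\<close>

interpretation cs: vector_space cscale
  by unfold_locales (auto simp: cscale_def algebra_simps)

lemma sum_fun_apply: "(\<Sum>x\<in>A. (f x :: nat \<Rightarrow> complex)) i = (\<Sum>x\<in>A. f x i)"
  by (induction A rule: infinite_finite_induct) auto

lemma span_unit_vectors:
  assumes "\<forall>i>n. y i = (0::complex)"
  shows "y \<in> cs.span ((\<lambda>j i. if i = j then 1 else 0) ` {..n})"
proof -
  have "y = (\<Sum>j\<le>n. cscale (y j) (\<lambda>i. if i = j then 1 else 0))"
  proof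
    fix i
    have "(\<Sum>j\<le>n. cscale (y j) (\<lambda>i. if i = j then 1 else 0)) i = (\<Sum>j\<le>n. if j = i then y i else 0)"
      unfolding sum_fun_apply cscale_def by (intro sum.cong) auto
    then show "y i = (\<Sum>j\<le>n. cscale (y j) (\<lambda>i. if i = j then 1 else 0)) i"
      using assms by (auto simp: not_le)
  qed
  also have "\<dots> \<in> cs.span ((\<lambda>j i. if i = j then 1 else 0) ` {..n})"
    by (intro cs.span_sum cs.span_scale cs.span_base) auto
  finally show ?thesis .
qed

text \<open>A combination of the conjugated coefficient vectors that lies in the common kernel \<open>Z\<close> is
  orthogonal to itself, hence trivial; so independent forms would yield \<open>n + 2\<close> independent
  vectors supported in \<open>{..n}\<close>.\<close>

lemma three_forms_dependent:
  fixes T :: "(nat \<Rightarrow> complex) set" and c1 c2 c3 :: "nat \<Rightarrow> complex"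
  assumes dim: "n \<le> cs.dim T + 1"
    and supp: "\<And>v i. v \<in> T \<Longrightarrow> n < i \<Longrightarrow> v i = 0"
    and forms: "\<And>v. v \<in> T \<Longrightarrow>
      (\<Sum>i\<le>n. c1 i * v i) = 0 \<and> (\<Sum>i\<le>n. c2 i * v i) = 0 \<and> (\<Sum>i\<le>n. c3 i * v i) = 0"
  shows "\<exists>l1 l2 l3. (l1 \<noteq> 0 \<or> l2 \<noteq> 0 \<or> l3 \<noteq> 0) \<and> (\<forall>i\<le>n. l1 * c1 i + l2 * c2 i + l3 * c3 i = 0)"
proof (rule ccontr)
  assume "\<not> ?thesis"
  then have indep: "l1 = 0 \<and> l2 = 0 \<and> l3 = 0"
    if "\<forall>i\<le>n. l1 * c1 i + l2 * c2 i + l3 * c3 i = 0" for l1 l2 l3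
    using that by auto
  define Z where "Z = {y. (\<Sum>i\<le>n. c1 i * y i) = 0 \<and> (\<Sum>i\<le>n. c2 i * y i) = 0
      \<and> (\<Sum>i\<le>n. c3 i * y i) = 0 \<and> (\<forall>i>n. y i = 0)}"
  have subspace_Z: "cs.subspace Z"
    unfolding cs.subspace_def Z_def
    by (auto simp: cscale_def sum.distrib algebra_simps sum_distrib_left[symmetric])
  have TZ: "T \<subseteq> Z" using supp forms by (auto simp: Z_def)
  have span_T: "cs.span T \<subseteq> Z" by (rule cs.span_minimal[OF TZ subspace_Z])
  define cb where "cb c = (\<lambda>i. if i \<le> n then cnj (c i) else 0)" for c :: "nat \<Rightarrow> complex"
  have trivial: "a1 = 0 \<and> a2 = 0 \<and> a3 = 0"
    if "(\<lambda>i. a1 * cb c1 i + a2 * cb c2 i + a3 * cb c3 i) \<in> Z" (is "?y \<in> Z") for a1 a2 a3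
  proof -
    have "(\<Sum>i\<le>n. cnj (?y i) * ?y i)
        = cnj a1 * (\<Sum>i\<le>n. c1 i * ?y i) + cnj a2 * (\<Sum>i\<le>n. c2 i * ?y i) + cnj a3 * (\<Sum>i\<le>n. c3 i * ?y i)"
      by (simp add: cb_def sum.distrib sum_distrib_left algebra_simps)
    also have "\<dots> = 0" using that by (simp add: Z_def)
    finally have "of_real (\<Sum>i\<le>n. (norm (?y i))\<^sup>2) = (0::complex)"
      unfolding of_real_sum complex_norm_square by (simp add: mult.commute)
    then have "\<forall>i\<in>{..n}. (norm (?y i))\<^sup>2 = 0"
      by (subst (asm) of_real_eq_0_iff, subst (asm) sum_nonneg_eq_0_iff) auto
    then have "\<forall>i\<le>n. cnj (?y i) = 0" by simp
    then have "\<forall>i\<le>n. cnj a1 * c1 i + cnj a2 * c2 i + cnj a3 * c3 i = 0"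
      by (simp add: cb_def)
    from indep[OF this] show ?thesis by simp
  qed
  obtain B where B: "B \<subseteq> T" "cs.independent B" "T \<subseteq> cs.span B" "card B = cs.dim T"
    by (rule cs.basis_exists)
  have "n - 1 \<le> card B" using B(4) dim by simp
  then obtain S0 where S0: "S0 \<subseteq> B" "card S0 = n - 1" and fin_S0: "finite S0"
    by (rule obtain_subset_with_card_n)
  have span_S0: "cs.span S0 \<subseteq> Z"
    using cs.span_mono[of S0 T] S0(1) B(1) span_T by blast
  have n1: "cb c1 \<notin> cs.span S0"
  proof
    assume "cb c1 \<in> cs.span S0"
    then have "(\<lambda>i. 1 * cb c1 i + 0 * cb c2 i + 0 * cb c3 i) \<in> Z" using span_S0 by auto
    from trivial[OF this] show False by simp
  qed
  have n2: "cb c2 \<notin> cs.span (insert (cb c1) S0)"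
  proof
    assume "cb c2 \<in> cs.span (insert (cb c1) S0)"
    then obtain k where "cb c2 - cscale k (cb c1) \<in> Z"
      using span_S0 by (auto simp: cs.span_insert)
    moreover have "cb c2 - cscale k (cb c1) = (\<lambda>i. (-k) * cb c1 i + 1 * cb c2 i + 0 * cb c3 i)"
      by (auto simp: cscale_def)
    ultimately have "(\<lambda>i. (-k) * cb c1 i + 1 * cb c2 i + 0 * cb c3 i) \<in> Z" by simp
    from trivial[OF this] show False by simp
  qed
  have n3: "cb c3 \<notin> cs.span (insert (cb c2) (insert (cb c1) S0))"
  proof
    assume "cb c3 \<in> cs.span (insert (cb c2) (insert (cb c1) S0))"
    then obtain k1 k2 where "cb c3 - cscale k2 (cb c2) - cscale k1 (cb c1) \<in> Z"
      using span_S0 by (auto simp: cs.span_insert)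
    moreover have "cb c3 - cscale k2 (cb c2) - cscale k1 (cb c1)
        = (\<lambda>i. (-k1) * cb c1 i + (-k2) * cb c2 i + 1 * cb c3 i)"
      by (auto simp: cscale_def)
    ultimately have "(\<lambda>i. (-k1) * cb c1 i + (-k2) * cb c2 i + 1 * cb c3 i) \<in> Z" by simp
    from trivial[OF this] show False by simp
  qed
  define S where "S = insert (cb c3) (insert (cb c2) (insert (cb c1) S0))"
  define E where "E = (\<lambda>j i. if i = j then 1 else (0::complex)) ` {..n}"
  have "cs.independent S"
    unfolding S_def
    by (intro cs.independent_insertI n1 n2 n3 cs.independent_mono[OF B(2) S0(1)])
  moreover have "S \<subseteq> cs.span E"
  proof
    fix y assume "y \<in> S"
    then have "\<forall>i>n. y i = 0"
      using S0(1) B(1) TZ unfolding S_def Z_def cb_def by auto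
    then show "y \<in> cs.span E" unfolding E_def by (rule span_unit_vectors)
  qed
  ultimately have "card S \<le> card E"
    using cs.independent_span_bound[of E S] by (simp add: E_def)
  moreover have "card E \<le> n + 1"
    using card_image_le[of "{..n}"] by (simp add: E_def)
  moreover have "cb c1 \<notin> S0" "cb c2 \<notin> insert (cb c1) S0"
      "cb c3 \<notin> insert (cb c2) (insert (cb c1) S0)"
    using n1 n2 n3 cs.span_superset[of S0] cs.span_superset[of "insert (cb c1) S0"]
      cs.span_superset[of "insert (cb c2) (insert (cb c1) S0)"] by blast+
  then have "card S = n - 1 + 3"
    using fin_S0 S0(2) unfolding S_def by simp
  ultimately show False by simp
qed

definition skew5 :: "(nat \<Rightarrow> nat \<Rightarrow> complex) \<Rightarrow> bool" where
  "skew5 X \<longleftrightarrow> (\<forall>i\<in>{1..5}. \<forall>j\<in>{1..5}. X j i = - X i j)"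

lemma skew5D: "skew5 X \<Longrightarrow> i \<in> {1..5} \<Longrightarrow> j \<in> {1..5} \<Longrightarrow> X j i = - X i j"
  unfolding skew5_def by blast

lemma skew5_diag:
  assumes "skew5 X" "i \<in> {1..5}"
  shows "X i i = 0"
proof -
  have "2 * X i i = 0" using skew5D[OF assms assms(2)] by simp
  then show ?thesis by simp
qed

lemma skew5_lin:
  assumes "skew5 X" "skew5 Y"
  shows "skew5 (\<lambda>i j. s * X i j + t * Y i j)"
  unfolding skew5_def
proof (intro ballI)
  fix i j assume ij: "i \<in> {1..5::nat}" "j \<in> {1..5::nat}"
  show "s * X j i + t * Y j i = - (s * X i j + t * Y i j)"
    using skew5D[OF assms(1) ij] skew5D[OF assms(2) ij] by simp
qed

lemma skew5_sum:
  assumes "\<And>l. l \<in> L \<Longrightarrow> skew5 (X l)"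
  shows "skew5 (\<lambda>i j. \<Sum>l\<in>L. X l i j * c l)"
  unfolding skew5_def
proof (intro ballI)
  fix i j assume ij: "i \<in> {1..5::nat}" "j \<in> {1..5::nat}"
  have "(\<Sum>l\<in>L. X l j i * c l) = (\<Sum>l\<in>L. - (X l i j * c l))"
    using skew5D[OF assms ij] by (intro sum.cong) auto
  then show "(\<Sum>l\<in>L. X l j i * c l) = - (\<Sum>l\<in>L. X l i j * c l)"
    by (simp add: sum_negf)
qed

lemma skew5_fst_quad:
  assumes "alternating_quad A" "l \<in> {1..4}"
  shows "skew5 (\<lambda>i j. fst (A l i j))"
  using assms unfolding alternating_quad_def skew5_def by (metis fst_conv)

lemma skew5_snd_quad:
  assumes "alternating_quad A" "l \<in> {1..4}"
  shows "skew5 (\<lambda>i j. snd (A l i j))"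
  using assms unfolding alternating_quad_def skew5_def by (metis snd_conv)

definition evalA1 :: "quadR \<Rightarrow> (nat \<Rightarrow> complex) \<Rightarrow> nat \<Rightarrow> nat \<Rightarrow> complex" where
  "evalA1 A x i j = (\<Sum>k=1..4. snd (A k i j) * x k)"

lemma skew5_evalA0: "alternating_quad A \<Longrightarrow> skew5 (evalA0 A x)"
  unfolding evalA0_def red0_def by (rule skew5_sum) (rule skew5_fst_quad)

lemma skew5_evalA1: "alternating_quad A \<Longrightarrow> skew5 (evalA1 A x)"
  unfolding evalA1_def by (rule skew5_sum) (rule skew5_snd_quad)

lemma pf4_swap:
  assumes M: "skew5 M" and "a \<in> {1..5}" "b \<in> {1..5}" "c \<in> {1..5}" "d \<in> {1..5}"
  shows "pf4 M b a c d = - pf4 M a b c d" "pf4 M a c b d = - pf4 M a b c d"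
    "pf4 M a b d c = - pf4 M a b c d"
  using skew5D[OF M, of a b] skew5D[OF M, of b c] skew5D[OF M, of c d] assms(2-)
  by (simp_all add: pf4_def algebra_simps)

lemma pf4_repeated:
  assumes M: "skew5 M" and in5: "a \<in> {1..5}" "b \<in> {1..5}" "c \<in> {1..5}" "d \<in> {1..5}"
    and "\<not> distinct [a, b, c, d]"
  shows "pf4 M a b c d = 0"
proof -
  have "a = b \<or> a = c \<or> a = d \<or> b = c \<or> b = d \<or> c = d" using assms(6) by auto
  then show ?thesis
    using skew5_diag[OF M in5(1)] skew5_diag[OF M in5(2)] skew5_diag[OF M in5(3)]
      skew5D[OF M in5(1) in5(2)] skew5D[OF M in5(1) in5(3)] skew5D[OF M in5(2) in5(3)]
    unfolding pf4_def by (elim disjE) (simp_all add: algebra_simps)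
qed

text \<open>With an order condition attached, the swaps become terminating rewrite rules that sort the
  arguments.\<close>

lemma alternating4_vanishes:
  fixes f :: "nat \<Rightarrow> nat \<Rightarrow> nat \<Rightarrow> nat \<Rightarrow> 'a::ab_group_add"
  assumes swap: "\<And>a b c d. a \<in> {1..5} \<Longrightarrow> b \<in> {1..5} \<Longrightarrow> c \<in> {1..5} \<Longrightarrow> d \<in> {1..5} \<Longrightarrow>
      f b a c d = - f a b c d \<and> f a c b d = - f a b c d \<and> f a b d c = - f a b c d"
    and sorted: "\<And>a b c d. 1 \<le> a \<Longrightarrow> a < b \<Longrightarrow> b < c \<Longrightarrow> c < d \<Longrightarrow> d \<le> 5 \<Longrightarrow> f a b c d = 0"
    and in5: "a \<in> {1..5}" "b \<in> {1..5}" "c \<in> {1..5}" "d \<in> {1..5}"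
    and dist: "distinct [a, b, c, d]"
  shows "f a b c d = 0"
proof -
  have sort: "b < a \<Longrightarrow> f a b c d = - f b a c d" "c < b \<Longrightarrow> f a b c d = - f a c b d"
      "d < c \<Longrightarrow> f a b c d = - f a b d c"
    if "a \<in> {1..5}" "b \<in> {1..5}" "c \<in> {1..5}" "d \<in> {1..5}" for a b c d
    using swap[OF that(2,1,3,4), THEN conjunct1] swap[OF that(1,3,2,4), THEN conjunct2, THEN conjunct1]
      swap[OF that(1,2,4,3), THEN conjunct2, THEN conjunct2] by simp_all
  have increasing_pairs: "f w x y z = 0"
    if ord: "w < x" "y < z" and mem: "w \<in> {1..5}" "x \<in> {1..5}" "y \<in> {1..5}" "z \<in> {1..5}"
      and dist': "distinct [w, x, y, z]" for w x y z
  proof -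
    consider "x < y" | "w < y" "y < x" "x < z" | "w < y" "z < x" | "y < w" "x < z"
      | "y < w" "w < z" "z < x" | "z < w"
      using ord dist' by fastforce
    then show ?thesis
      by cases (use ord mem in \<open>simp_all add: sort[OF mem] sort[OF mem(1,3,2,4)]
        sort[OF mem(3,1,2,4)] sort[OF mem(3,1,4,2)] sorted\<close>)
  qed
  show ?thesis
  proof (cases "a < b"; cases "c < d")
  qed (use dist in5 in \<open>simp_all add: sort[OF in5] sort[OF in5(2,1,3,4)] increasing_pairs\<close>)
qed

lemma upt_1_6: "[1..<6] = [1, 2, 3, 4, 5::nat]" by (simp add: upt_rec)

lemma subpf_complement:
  fixes M :: "nat \<Rightarrow> nat \<Rightarrow> 'a::comm_ring_1"
  shows "subpf M 1 = pf4 M 2 3 4 5" "subpf M 2 = pf4 M 1 3 4 5" "subpf M 3 = pf4 M 1 2 4 5"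
    "subpf M 4 = pf4 M 1 2 3 5" "subpf M 5 = pf4 M 1 2 3 4"
  unfolding subpf_def upt_1_6 by simp_all

lemma subpf_sorted:
  fixes M :: "nat \<Rightarrow> nat \<Rightarrow> 'a::comm_ring_1"
  assumes "1 \<le> a" "a < b" "b < c" "c < d" "d \<le> 5"
  obtains e where "e \<in> {1..5}" "subpf M e = pf4 M a b c d"
proof -
  have "a = 2 \<and> b = 3 \<and> c = 4 \<and> d = 5 \<or> a = 1 \<and> b = 3 \<and> c = 4 \<and> d = 5
      \<or> a = 1 \<and> b = 2 \<and> c = 4 \<and> d = 5 \<or> a = 1 \<and> b = 2 \<and> c = 3 \<and> d = 5
      \<or> a = 1 \<and> b = 2 \<and> c = 3 \<and> d = 4"
    using assms by presburger
  then show thesis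
    using that[of 1] that[of 2] that[of 3] that[of 4] that[of 5] subpf_complement[of M] by auto
qed

lemma pf4_vanishes:
  assumes M: "skew5 M" and sub: "\<forall>e\<in>{1..5}. subpf M e = 0"
    and in5: "a \<in> {1..5}" "b \<in> {1..5}" "c \<in> {1..5}" "d \<in> {1..5}"
  shows "pf4 M a b c d = 0"
proof (cases "distinct [a, b, c, d]")
  case True
  show ?thesis
  proof (rule alternating4_vanishes[OF _ _ in5 True])
    show "pf4 M b a c d = - pf4 M a b c d \<and> pf4 M a c b d = - pf4 M a b c d
        \<and> pf4 M a b d c = - pf4 M a b c d"
      if "a \<in> {1..5}" "b \<in> {1..5}" "c \<in> {1..5}" "d \<in> {1..5}" for a b c d
      using pf4_swap[OF M that] by simp
    show "pf4 M a b c d = 0" if incr: "1 \<le> a" "a < b" "b < c" "c < d" "d \<le> 5" for a b c d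
    proof -
      obtain e where "e \<in> {1..5}" "subpf M e = pf4 M a b c d"
        by (rule subpf_sorted[OF incr])
      then show ?thesis using sub by simp
    qed
  qed
next
  case False
  then show ?thesis by (rule pf4_repeated[OF M in5])
qed

text \<open>The polarization of \<open>pf4\<close>: the first-order term of \<open>pf4 (M + \<epsilon> N)\<close>.\<close>

definition pf4_polar :: "(nat \<Rightarrow> nat \<Rightarrow> 'a::comm_ring_1) \<Rightarrow> (nat \<Rightarrow> nat \<Rightarrow> 'a) \<Rightarrow> nat \<Rightarrow> nat \<Rightarrow> nat \<Rightarrow> nat \<Rightarrow> 'a"
  where "pf4_polar M N a b c d =
    M a b * N c d + N a b * M c d - M a c * N b d - N a c * M b d + M a d * N b c + N a d * M b c"

lemma pf4_polar_eq:
  "pf4_polar M N a b c d = pf4 (\<lambda>i j. M i j + N i j) a b c d - pf4 M a b c d - pf4 N a b c d"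
  by (simp add: pf4_polar_def pf4_def algebra_simps)

lemma pf4_polar_vanishes:
  assumes M: "skew5 M" and N: "skew5 N"
    and sorted: "\<And>a b c d. 1 \<le> a \<Longrightarrow> a < b \<Longrightarrow> b < c \<Longrightarrow> c < d \<Longrightarrow> d \<le> 5 \<Longrightarrow> pf4_polar M N a b c d = 0"
    and in5: "a \<in> {1..5}" "b \<in> {1..5}" "c \<in> {1..5}" "d \<in> {1..5}"
    and dist: "distinct [a, b, c, d]"
  shows "pf4_polar M N a b c d = 0"
proof (rule alternating4_vanishes[OF _ sorted in5 dist])
  have MN: "skew5 (\<lambda>i j. M i j + N i j)" using skew5_lin[OF M N, of 1 1] by simp
  show "pf4_polar M N b a c d = - pf4_polar M N a b c d \<and> pf4_polar M N a c b d = - pf4_polar M N a b c d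
      \<and> pf4_polar M N a b d c = - pf4_polar M N a b c d"
    if "a \<in> {1..5}" "b \<in> {1..5}" "c \<in> {1..5}" "d \<in> {1..5}" for a b c d
    using pf4_swap[OF M that] pf4_swap[OF N that] pf4_swap[OF MN that] by (simp add: pf4_polar_eq)
qed

definition bform :: "(nat \<Rightarrow> nat \<Rightarrow> complex) \<Rightarrow> (nat \<Rightarrow> complex) \<Rightarrow> (nat \<Rightarrow> complex) \<Rightarrow> complex" where
  "bform X u w = (\<Sum>a=1..5. \<Sum>b=1..5. u a * X a b * w b)"

lemma bform_add_left: "bform X (\<lambda>i. u i + u' i) w = bform X u w + bform X u' w"
  by (simp add: bform_def algebra_simps sum.distrib)

lemma bform_add_right: "bform X u (\<lambda>i. w i + w' i) = bform X u w + bform X u w'"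
  by (simp add: bform_def algebra_simps sum.distrib)

lemma bform_scale_left: "bform X (\<lambda>i. x * u i) w = x * bform X u w"
  by (simp add: bform_def sum_distrib_left algebra_simps)

lemma bform_scale_right: "bform X u (\<lambda>i. x * w i) = x * bform X u w"
  by (simp add: bform_def sum_distrib_left algebra_simps)

lemma bform_swap:
  assumes X: "skew5 X"
  shows "bform X w u = - bform X u w"
proof -
  have "bform X w u = (\<Sum>b=1..5. \<Sum>a=1..5. w a * X a b * u b)"
    unfolding bform_def by (rule sum.swap)
  also have "\<dots> = (\<Sum>b=1..5. \<Sum>a=1..5. - (u b * X b a * w a))"
  proof (intro sum.cong refl)
    fix a b assume "a \<in> {1..5::nat}" "b \<in> {1..5::nat}"
    then show "w a * X a b * u b = - (u b * X b a * w a)" using skew5D[OF X, of b a] by simp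
  qed
  also have "\<dots> = - bform X u w" by (simp add: bform_def sum_negf)
  finally show ?thesis .
qed

lemma bform_self: "skew5 X \<Longrightarrow> bform X u u = 0"
  using bform_swap[of X u u] by simp

lemma bform_sum_matrix:
  "bform (\<lambda>a b. \<Sum>l\<in>L. X l a b * c l) u w = (\<Sum>l\<in>L. c l * bform (X l) u w)"
proof -
  have "bform (\<lambda>a b. \<Sum>l\<in>L. X l a b * c l) u w = (\<Sum>a=1..5. \<Sum>b=1..5. \<Sum>l\<in>L. c l * (u a * X l a b * w b))"
    unfolding bform_def by (simp add: sum_distrib_left sum_distrib_right algebra_simps)
  also have "\<dots> = (\<Sum>l\<in>L. c l * bform (X l) u w)"
    unfolding bform_def sum_distrib_left by (simp add: sum.swap[where A = L])
  finally show ?thesis .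
qed

lemma bform_add_matrix: "bform (\<lambda>a b. X a b + t * Y a b) u w = bform X u w + t * bform Y u w"
  by (simp add: bform_def algebra_simps sum.distrib sum_distrib_left)

lemma bform_unit_vectors:
  assumes "i \<in> {1..5}" "j \<in> {1..5}"
  shows "bform X (\<lambda>a. if i = a then 1 else 0) (\<lambda>b. if j = b then 1 else 0) = X i j"
proof -
  have "bform X (\<lambda>a. if i = a then 1 else 0) (\<lambda>b. if j = b then 1 else 0)
      = (\<Sum>a=1..5. if a = i then (\<Sum>b=1..5. if b = j then X i j else 0) else 0)"
    unfolding bform_def
  proof (intro sum.cong refl)
    fix a
    show "(\<Sum>b=1..5. (if i = a then 1 else 0) * X a b * (if j = b then 1 else 0))
        = (if a = i then \<Sum>b=1..5. if b = j then X i j else 0 else 0)"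
      by (cases "a = i") (simp_all add: if_distrib cong: if_cong)
  qed
  also have "\<dots> = X i j" using assms by (simp only: sum.delta finite_atLeastAtMost if_True)
  finally show ?thesis .
qed

definition kernel5 :: "(nat \<Rightarrow> nat \<Rightarrow> complex) \<Rightarrow> (nat \<Rightarrow> complex) \<Rightarrow> bool" where
  "kernel5 X w \<longleftrightarrow> (\<forall>i\<in>{1..5}. (\<Sum>j=1..5. X i j * w j) = 0)"

lemma kernel5_add: "kernel5 X u \<Longrightarrow> kernel5 X w \<Longrightarrow> kernel5 X (\<lambda>j. u j + w j)"
  by (simp add: kernel5_def algebra_simps sum.distrib)

lemma kernel5_scale: "kernel5 X u \<Longrightarrow> kernel5 X (\<lambda>j. x * u j)"
  by (simp add: kernel5_def mult.left_commute flip: sum_distrib_left)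

lemma bform_kernel_right: "kernel5 X w \<Longrightarrow> bform X u w = 0"
  unfolding bform_def kernel5_def by (simp add: mult.assoc flip: sum_distrib_left)

lemma bform_comb2:
  assumes "skew5 X"
  shows "bform X (\<lambda>i. x1 * r i + x2 * s i) (\<lambda>i. y1 * r i + y2 * s i) = (x1 * y2 - x2 * y1) * bform X r s"
  using bform_swap[OF assms, where u = r and w = s] bform_self[OF assms]
  by (simp add: bform_add_left bform_add_right bform_scale_left bform_scale_right algebra_simps)

lemma bform_comb3:
  assumes "skew5 X"
  shows "bform X (\<lambda>i. u1 * k1 i + u2 * k2 i + u3 * k3 i) (\<lambda>i. w1 * k1 i + w2 * k2 i + w3 * k3 i)
    = (u1 * w2 - u2 * w1) * bform X k1 k2 + (u1 * w3 - u3 * w1) * bform X k1 k3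
      + (u2 * w3 - u3 * w2) * bform X k2 k3"
  using bform_swap[OF assms, where u = k1 and w = k2] bform_swap[OF assms, where u = k1 and w = k3]
    bform_swap[OF assms, where u = k2 and w = k3] bform_self[OF assms]
  by (simp add: bform_add_left bform_add_right bform_scale_left bform_scale_right algebra_simps)

lemma bform_kernel_left: "skew5 X \<Longrightarrow> kernel5 X u \<Longrightarrow> bform X u w = 0"
  using bform_swap[of X u w] bform_kernel_right[of X u w] by simp

text \<open>For a skew matrix of rank two with \<open>M a b \<noteq> 0\<close>, the vectors with \<open>c \<notin> {a, b}\<close> span the
  kernel: each solves the equations of rows \<open>a\<close> and \<open>b\<close> with \<open>c\<close>-th coordinate \<open>1\<close>.\<close>

definition kernel_vec :: "(nat \<Rightarrow> nat \<Rightarrow> complex) \<Rightarrow> nat \<Rightarrow> nat \<Rightarrow> nat \<Rightarrow> nat \<Rightarrow> complex" where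
  "kernel_vec M a b c = (\<lambda>i. if i = c then 1 else if i = a then M b c / M a b
     else if i = b then - M a c / M a b else 0)"

lemma kernel_vec_at: "c' \<notin> {a, b} \<Longrightarrow> kernel_vec M a b c c' = (if c' = c then 1 else 0)"
  by (auto simp: kernel_vec_def)

lemma sum_kernel_vec:
  assumes "a \<in> {1..5}" "b \<in> {1..5}" "c \<in> {1..5}" "distinct [a, b, c]"
  shows "(\<Sum>j=1..5. g j * kernel_vec M a b c j) = g c + M b c / M a b * g a - M a c / M a b * g b"
proof -
  have "g j * kernel_vec M a b c j = (if j = c then g c else 0) + (if j = a then M b c / M a b * g a else 0)
      - (if j = b then M a c / M a b * g b else 0)" for j
    using assms(4) by (auto simp: kernel_vec_def)
  then show ?thesis using assms(1-3) by (simp add: sum.distrib sum_subtractf)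
qed

lemma kernel5_kernel_vec:
  assumes M: "skew5 M" and sub: "\<forall>e\<in>{1..5}. subpf M e = 0" and Mab: "M a b \<noteq> 0"
    and in5: "a \<in> {1..5}" "b \<in> {1..5}" "c \<in> {1..5}" and dist: "distinct [a, b, c]"
  shows "kernel5 M (kernel_vec M a b c)"
  unfolding kernel5_def
proof
  fix d assume d: "d \<in> {1..5::nat}"
  have "M a b * (\<Sum>j=1..5. M d j * kernel_vec M a b c j) = - pf4 M a b c d"
    using sum_kernel_vec[OF in5 dist, where g = "M d" and M = M] skew5D[OF M in5(3) d] skew5D[OF M in5(1) d]
      skew5D[OF M in5(2) d] Mab
    by (simp add: pf4_def field_simps)
  then show "(\<Sum>j=1..5. M d j * kernel_vec M a b c j) = 0"
    using pf4_vanishes[OF M sub in5 d] Mab by simp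
qed

lemma bform_kernel_vec:
  assumes M: "skew5 M" and N: "skew5 N" and sub: "\<forall>e\<in>{1..5}. subpf M e = 0" and Mab: "M a b \<noteq> 0"
    and in5: "a \<in> {1..5}" "b \<in> {1..5}" "c \<in> {1..5}" "d \<in> {1..5}"
    and dist: "distinct [a, b, c]" "distinct [a, b, d]"
  shows "M a b * bform N (kernel_vec M a b c) (kernel_vec M a b d) = pf4_polar M N a b c d"
proof -
  define row where "row i = N i d + M b d / M a b * N i a - M a d / M a b * N i b" for i
  have "bform N (kernel_vec M a b c) (kernel_vec M a b d)
      = (\<Sum>i=1..5. kernel_vec M a b c i * (\<Sum>j=1..5. N i j * kernel_vec M a b d j))"
    unfolding bform_def by (simp add: sum_distrib_left mult.assoc)
  also have "\<dots> = (\<Sum>i=1..5. row i * kernel_vec M a b c i)"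
    using sum_kernel_vec[OF in5(1,2,4) dist(2), where M = M] by (simp add: row_def mult.commute)
  also have "\<dots> = row c + M b c / M a b * row a - M a c / M a b * row b"
    by (rule sum_kernel_vec[OF in5(1-3) dist(1)])
  finally have "M a b * bform N (kernel_vec M a b c) (kernel_vec M a b d)
      = M a b * (row c + M b c / M a b * row a - M a c / M a b * row b)" by simp
  also have "\<dots> = pf4_polar M N a b c d - N a b * pf4 M a b c d / M a b"
    using Mab skew5_diag[OF N in5(1)] skew5_diag[OF N in5(2)] skew5D[OF N in5(1) in5(2)]
      skew5D[OF N in5(1) in5(3)] skew5D[OF N in5(2) in5(3)]
    by (simp add: row_def pf4_def pf4_polar_def field_simps)
  finally show ?thesis using pf4_vanishes[OF M sub in5] by simp
qed

text \<open>The first-order part of \<open>A(p + \<epsilon> v)\<close> when \<open>u\<close> is sent to \<open>v 0 \<cdot> \<epsilon>\<close>.\<close>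

definition tangent_matrix :: "quadR \<Rightarrow> (nat \<Rightarrow> complex) \<Rightarrow> (nat \<Rightarrow> complex) \<Rightarrow> nat \<Rightarrow> nat \<Rightarrow> complex"
  where "tangent_matrix A p v i j = evalA0 A v i j + v 0 * evalA1 A p i j"

lemma skew5_tangent_matrix: "alternating_quad A \<Longrightarrow> skew5 (tangent_matrix A p v)"
  using skew5_lin[OF skew5_evalA0[where x = v] skew5_evalA1[where x = p], where s = 1 and t = "v 0"]
  by (simp add: tangent_matrix_def[abs_def])

lemma coeff_mult_1:
  fixes x y :: "'a::comm_semiring_0 poly"
  shows "coeff (x * y) (Suc 0) = coeff x 0 * coeff y (Suc 0) + coeff x (Suc 0) * coeff y 0"
  by (simp add: coeff_mult)

lemma coeff_pf4_1:
  fixes X :: "nat \<Rightarrow> nat \<Rightarrow> 'a::comm_ring_1 poly"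
  shows "coeff (pf4 X a b c d) 1 = pf4_polar (\<lambda>i j. coeff (X i j) 0) (\<lambda>i j. coeff (X i j) 1) a b c d"
  by (simp add: pf4_def pf4_polar_def coeff_mult_1 algebra_simps)

lemma coeff_evalA_dual:
  "coeff (evalA_dual A (v 0) p v i j) 0 = evalA0 A p i j"
  "coeff (evalA_dual A (v 0) p v i j) 1 = tangent_matrix A p v i j"
  by (simp_all add: evalA_dual_def evalA0_def evalA1_def red0_def tangent_matrix_def coeff_sum
      coeff_mult_1 sum.distrib sum_distrib_left algebra_simps)

lemma tangent_cone_polar_vanishes:
  assumes A: "alternating_quad A" and v: "v \<in> tangent_cone A p"
    and in5: "a \<in> {1..5}" "b \<in> {1..5}" "c \<in> {1..5}" "d \<in> {1..5}"
    and dist: "distinct [a, b, c, d]"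
  shows "pf4_polar (evalA0 A p) (tangent_matrix A p v) a b c d = 0"
proof (rule pf4_polar_vanishes[OF skew5_evalA0[OF A] skew5_tangent_matrix[OF A] _ in5 dist])
  fix a b c d :: nat assume incr: "1 \<le> a" "a < b" "b < c" "c < d" "d \<le> 5"
  define E where "E = evalA_dual A (v 0) p v"
  obtain e where e: "e \<in> {1..5}" "subpf E e = pf4 E a b c d"
    by (rule subpf_sorted[OF incr])
  have "coeff (subpf E e) 1 = 0" using v e(1) unfolding tangent_cone_def E_def by blast
  then have "coeff (pf4 E a b c d) 1 = 0" by (simp only: e(2))
  then show "pf4_polar (evalA0 A p) (tangent_matrix A p v) a b c d = 0"
    unfolding coeff_pf4_1 E_def coeff_evalA_dual .
qed

definition tangent_coeff :: "quadR \<Rightarrow> (nat \<Rightarrow> complex) \<Rightarrow> (nat \<Rightarrow> complex) \<Rightarrow> (nat \<Rightarrow> complex) \<Rightarrow> nat \<Rightarrow> complex"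
  where "tangent_coeff A p u w i =
    (if i = 0 then bform (evalA1 A p) u w else bform (\<lambda>a b. fst (A i a b)) u w)"

lemma bform_tangent_matrix:
  "bform (tangent_matrix A p v) u w = (\<Sum>i\<le>4. tangent_coeff A p u w i * v i)"
proof -
  have "bform (tangent_matrix A p v) u w
      = (\<Sum>l=1..4. v l * bform (\<lambda>a b. fst (A l a b)) u w) + v 0 * bform (evalA1 A p) u w"
    unfolding tangent_matrix_def evalA0_def red0_def bform_add_matrix bform_sum_matrix ..
  also have "\<dots> = (\<Sum>i\<le>4. tangent_coeff A p u w i * v i)"
    by (simp add: atMost_atLeast0 sum.atLeast_Suc_atMost tangent_coeff_def mult.commute)
  finally show ?thesis .
qed

lemma tangent_kernel_pairings_dependent:
  assumes A: "alternating_quad A" and X: "on_X A p" and dim: "zariski_tangent_dim A p \<ge> 2"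
    and Mab: "evalA0 A p a b \<noteq> 0"
    and in5: "a \<in> {1..5}" "b \<in> {1..5}" "c1 \<in> {1..5}" "c2 \<in> {1..5}" "c3 \<in> {1..5}"
    and dist: "distinct [a, b, c1, c2, c3]"
  defines "k \<equiv> kernel_vec (evalA0 A p) a b"
  obtains l1 l2 l3 where "l1 \<noteq> 0 \<or> l2 \<noteq> 0 \<or> l3 \<noteq> 0"
    "\<And>X. X \<in> insert (evalA1 A p) ((\<lambda>l i j. fst (A l i j)) ` {1..4}) \<Longrightarrow>
       l1 * bform X (k c1) (k c2) + l2 * bform X (k c1) (k c3) + l3 * bform X (k c2) (k c3) = 0"
proof -
  have sub: "\<forall>e\<in>{1..5}. subpf (evalA0 A p) e = 0" using X unfolding on_X_def by blast
  have pairing: "(\<Sum>i\<le>4. tangent_coeff A p (k c) (k d) i * v i) = 0"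
    if v: "v \<in> tangent_cone A p" and cd: "c \<in> {1..5}" "d \<in> {1..5}" "distinct [a, b, c, d]" for v c d
  proof -
    have "evalA0 A p a b * bform (tangent_matrix A p v) (k c) (k d)
        = pf4_polar (evalA0 A p) (tangent_matrix A p v) a b c d"
      unfolding k_def using cd
      by (intro bform_kernel_vec skew5_evalA0 skew5_tangent_matrix A sub Mab in5(1,2)) auto
    also have "\<dots> = 0" by (rule tangent_cone_polar_vanishes[OF A v in5(1,2) cd])
    finally show ?thesis using Mab by (simp add: bform_tangent_matrix)
  qed
  have "\<exists>l1 l2 l3. (l1 \<noteq> 0 \<or> l2 \<noteq> 0 \<or> l3 \<noteq> 0) \<and> (\<forall>i\<le>4.
      l1 * tangent_coeff A p (k c1) (k c2) i + l2 * tangent_coeff A p (k c1) (k c3) i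
      + l3 * tangent_coeff A p (k c2) (k c3) i = 0)"
  proof (rule three_forms_dependent[where T = "tangent_cone A p"])
    show "4 \<le> cs.dim (tangent_cone A p) + 1"
      using dim unfolding zariski_tangent_dim_def by simp
    show "v i = 0" if "v \<in> tangent_cone A p" "4 < i" for v i
      using that unfolding tangent_cone_def by blast
    show "(\<Sum>i\<le>4. tangent_coeff A p (k c1) (k c2) i * v i) = 0
        \<and> (\<Sum>i\<le>4. tangent_coeff A p (k c1) (k c3) i * v i) = 0
        \<and> (\<Sum>i\<le>4. tangent_coeff A p (k c2) (k c3) i * v i) = 0"
      if "v \<in> tangent_cone A p" for v
      using pairing[OF that in5(3,4)] pairing[OF that in5(3,5)] pairing[OF that in5(4,5)] dist
      by simp
  qed
  then obtain l1 l2 l3 where l: "l1 \<noteq> 0 \<or> l2 \<noteq> 0 \<or> l3 \<noteq> 0" "\<forall>i\<le>4.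
      l1 * tangent_coeff A p (k c1) (k c2) i + l2 * tangent_coeff A p (k c1) (k c3) i
      + l3 * tangent_coeff A p (k c2) (k c3) i = 0"
    by blast
  show thesis
  proof (rule that[OF l(1)])
    fix X assume "X \<in> insert (evalA1 A p) ((\<lambda>l i j. fst (A l i j)) ` {1..4})"
    then consider "X = evalA1 A p" | l where "l \<in> {1..4}" "X = (\<lambda>i j. fst (A l i j))"
      by blast
    then show "l1 * bform X (k c1) (k c2) + l2 * bform X (k c1) (k c3) + l3 * bform X (k c2) (k c3) = 0"
    proof cases
      case 1
      then show ?thesis using l(2)[rule_format, of 0] by (simp add: tangent_coeff_def)
    next
      case (2 l)
      then show ?thesis using l(2)[rule_format, of l] by (simp add: tangent_coeff_def)
    qed
  qed
qed

lemma wedge3_decomposable: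
  "\<exists>u1 u2 u3 w1 w2 w3 :: complex.
     u1 * w2 - u2 * w1 = l1 \<and> u1 * w3 - u3 * w1 = l2 \<and> u2 * w3 - u3 * w2 = l3"
proof (cases "l1 = 0")
  case True
  then show ?thesis by (intro exI[of _ l2] exI[of _ l3] exI[of _ 0] exI[of _ 0] exI[of _ 0] exI[of _ 1]) simp
next
  case False
  then show ?thesis
    by (intro exI[of _ 1] exI[of _ 0] exI[of _ "- l3 / l1"] exI[of _ 0] exI[of _ l1] exI[of _ l2])
      (simp add: field_simps)
qed

lemma complement_of_pair:
  fixes a b :: nat
  assumes "a \<in> {1..5}" "b \<in> {1..5}" "a \<noteq> b"
  obtains c1 c2 c3 where "c1 \<in> {1..5}" "c2 \<in> {1..5}" "c3 \<in> {1..5}" "distinct [a, b, c1, c2, c3]"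
proof -
  have "card ({1..5} - {a, b}) = card {1..5::nat} - card {a, b}"
    using assms(1,2) by (intro card_Diff_subset) auto
  also have "\<dots> = 3" using assms(3) by simp
  finally obtain c1 c2 c3 where c: "{1..5} - {a, b} = {c1, c2, c3}" "c1 \<noteq> c2" "c2 \<noteq> c3" "c1 \<noteq> c3"
    unfolding card_3_iff by blast
  have "{c1, c2, c3} \<subseteq> {1..5} - {a, b}" by (simp only: c(1) subset_refl)
  with c(2-4) assms(3) show thesis by (intro that[of c1 c2 c3]) auto
qed

definition isotropic_kernel_pair :: "quadR \<Rightarrow> (nat \<Rightarrow> complex) \<Rightarrow> (nat \<Rightarrow> complex) \<Rightarrow> (nat \<Rightarrow> complex) \<Rightarrow> bool"
  where "isotropic_kernel_pair A p r s \<longleftrightarrow>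
    kernel5 (evalA0 A p) r \<and> kernel5 (evalA0 A p) s \<and>
    (\<forall>l\<in>{1..4}. bform (\<lambda>i j. fst (A l i j)) r s = 0) \<and> bform (evalA1 A p) r s = 0"

lemma isotropic_kernel_pair_comb:
  assumes A: "alternating_quad A" and rs: "isotropic_kernel_pair A p r s"
  shows "isotropic_kernel_pair A p (\<lambda>k. x1 * r k + x2 * s k) (\<lambda>k. y1 * r k + y2 * s k)"
  using rs bform_comb2[OF skew5_evalA1[OF A]] bform_comb2[OF skew5_fst_quad[OF A]]
  by (simp add: isotropic_kernel_pair_def kernel5_add kernel5_scale)

lemma isotropic_kernel_plane:
  assumes A: "alternating_quad A" and X: "on_X A p" and dim: "zariski_tangent_dim A p \<ge> 2"
    and ab: "a \<in> {1..5}" "b \<in> {1..5}" "evalA0 A p a b \<noteq> 0"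
  obtains r s i j where "isotropic_kernel_pair A p r s"
    "i \<in> {1..5}" "j \<in> {1..5}" "r i * s j - r j * s i \<noteq> 0"
proof -
  let ?M = "evalA0 A p"
  define k where "k = kernel_vec ?M a b"
  have M: "skew5 ?M" by (rule skew5_evalA0[OF A])
  have sub: "\<forall>e\<in>{1..5}. subpf ?M e = 0" using X unfolding on_X_def by blast
  have "a \<noteq> b" using ab skew5_diag[OF M] by auto
  then obtain c1 c2 c3 where c: "c1 \<in> {1..5}" "c2 \<in> {1..5}" "c3 \<in> {1..5}"
    and dist: "distinct [a, b, c1, c2, c3]"
    using complement_of_pair[OF ab(1,2)] by blast
  obtain l1 l2 l3 where l: "l1 \<noteq> 0 \<or> l2 \<noteq> 0 \<or> l3 \<noteq> 0"
    "\<And>X. X \<in> insert (evalA1 A p) ((\<lambda>l i j. fst (A l i j)) ` {1..4}) \<Longrightarrow>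
       l1 * bform X (k c1) (k c2) + l2 * bform X (k c1) (k c3) + l3 * bform X (k c2) (k c3) = 0"
    using tangent_kernel_pairings_dependent[OF A X dim ab(3) ab(1,2) c dist] unfolding k_def by blast
  obtain u1 u2 u3 w1 w2 w3 where U: "u1 * w2 - u2 * w1 = l1" "u1 * w3 - u3 * w1 = l2"
      "u2 * w3 - u3 * w2 = l3"
    using wedge3_decomposable by blast
  define r where "r = (\<lambda>i. u1 * k c1 i + u2 * k c2 i + u3 * k c3 i)"
  define s where "s = (\<lambda>i. w1 * k c1 i + w2 * k c2 i + w3 * k c3 i)"
  have ker: "kernel5 ?M (k c)" if "c \<in> {c1, c2, c3}" for c
    unfolding k_def using that c dist by (intro kernel5_kernel_vec[OF M sub ab(3) ab(1,2)]) auto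
  have ker_rs: "kernel5 ?M r" "kernel5 ?M s"
    unfolding r_def s_def by (intro kernel5_add kernel5_scale ker; simp)+
  have bform_rs: "bform X r s = l1 * bform X (k c1) (k c2) + l2 * bform X (k c1) (k c3)
      + l3 * bform X (k c2) (k c3)" if "skew5 X" for X
    unfolding r_def s_def bform_comb3[OF that] U ..
  have iso: "bform (\<lambda>i j. fst (A l i j)) r s = 0" if "l \<in> {1..4}" for l
    using bform_rs[OF skew5_fst_quad[OF A that]] l(2) that by simp
  have iso1: "bform (evalA1 A p) r s = 0"
    using bform_rs[OF skew5_evalA1[OF A]] l(2) by simp
  have "k c c' = (if c' = c then 1 else 0)" if "c' \<in> {c1, c2, c3}" for c c'
    using that dist unfolding k_def by (intro kernel_vec_at) auto
  moreover have "c2 \<noteq> c1" "c3 \<noteq> c1" "c3 \<noteq> c2" using dist by auto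
  ultimately have "r c1 = u1" "r c2 = u2" "r c3 = u3" "s c1 = w1" "s c2 = w2" "s c3 = w3"
    by (simp_all add: r_def s_def)
  then have "\<exists>i\<in>{c1, c2, c3}. \<exists>j\<in>{c1, c2, c3}. r i * s j - r j * s i \<noteq> 0"
    using U l(1) by auto
  then obtain i j where "i \<in> {c1, c2, c3}" "j \<in> {c1, c2, c3}" "r i * s j - r j * s i \<noteq> 0"
    by blast
  moreover have "isotropic_kernel_pair A p r s"
    using ker_rs iso iso1 by (simp add: isotropic_kernel_pair_def)
  ultimately show thesis using c by (intro that[of r s i j]) auto
qed

lemma obtain_last_index:
  fixes P :: "nat \<Rightarrow> bool"
  assumes "\<exists>k\<in>{1..n}. P k"
  obtains K where "K \<in> {1..n}" "P K" "\<And>l. l \<in> {1..n} \<Longrightarrow> K < l \<Longrightarrow> \<not> P l"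
proof
  let ?S = "{k \<in> {1..n}. P k}"
  have "finite ?S" "?S \<noteq> {}" using assms by auto
  then show "Max ?S \<in> {1..n}" "P (Max ?S)" using Max_in by blast+
  show "\<not> P l" if "l \<in> {1..n}" "Max ?S < l" for l
  proof
    assume "P l"
    with that(1) have "l \<le> Max ?S" by (intro Max_ge[OF \<open>finite ?S\<close>]) simp
    with that(2) show False by simp
  qed
qed

lemma echelon_pair:
  fixes r s :: "nat \<Rightarrow> complex"
  assumes ij: "i \<in> {1..5}" "j \<in> {1..5}" "r i * s j - r j * s i \<noteq> 0"
  obtains I J x1 x2 y1 y2 where "1 \<le> I" "I < J" "J \<le> 5"
    "x1 * r I + x2 * s I = 1" "\<And>k. k \<in> {1..5} \<Longrightarrow> I < k \<Longrightarrow> x1 * r k + x2 * s k = 0"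
    "y1 * r J + y2 * s J = 1" "\<And>k. k \<in> {1..5} \<Longrightarrow> J < k \<Longrightarrow> y1 * r k + y2 * s k = 0"
proof -
  have "\<exists>k\<in>{1..5}. r k \<noteq> 0 \<or> s k \<noteq> 0" using ij by (intro bexI[of _ i]) auto
  then obtain J where J: "J \<in> {1..5}" "r J \<noteq> 0 \<or> s J \<noteq> 0"
    and J_last: "\<And>k. k \<in> {1..5} \<Longrightarrow> J < k \<Longrightarrow> r k = 0 \<and> s k = 0"
    by (rule obtain_last_index) blast
  obtain y1 y2 where y: "y1 * r J + y2 * s J = 1"
  proof (cases "r J = 0")
    case True
    with J(2) show thesis by (intro that[of 0 "1 / s J"]) simp
  next
    case False
    then show thesis by (intro that[of "1 / r J" 0]) simp
  qed
  define t where "t k = s J * r k - r J * s k" for k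
  have t_from_J: "t k = 0" if "k \<in> {1..5}" "J \<le> k" for k
    using that J_last[of k] by (cases "k = J") (auto simp: t_def)
  have "\<exists>k\<in>{1..5}. t k \<noteq> 0"
  proof (rule ccontr)
    assume "\<not> ?thesis"
    then have "t i = 0" "t j = 0" using ij by auto
    then have "s J * (r i * s j - r j * s i) = 0" "r J * (r i * s j - r j * s i) = 0"
      unfolding t_def by algebra+
    with J(2) ij(3) show False by simp
  qed
  then obtain I where I: "I \<in> {1..5}" "t I \<noteq> 0"
    and I_last: "\<And>k. k \<in> {1..5} \<Longrightarrow> I < k \<Longrightarrow> t k = 0"
    by (rule obtain_last_index) blast
  have "I < J" using I t_from_J by (meson not_le)
  define d where "d = t I"
  have "d \<noteq> 0" using I(2) by (simp add: d_def)
  then have x: "s J / d * r k + - r J / d * s k = t k / d" for k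
    by (simp add: t_def field_simps)
  show thesis
  proof (rule that[of I J "s J / d" "- r J / d" y1 y2])
    show "s J / d * r I + - r J / d * s I = 1"
      unfolding x using \<open>d \<noteq> 0\<close> by (simp add: d_def)
    show "s J / d * r k + - r J / d * s k = 0" if "k \<in> {1..5}" "I < k" for k
      unfolding x using I_last[OF that] by simp
  qed (use I J \<open>I < J\<close> y J_last in auto)
qed

definition identity_with_rows :: "nat set \<Rightarrow> (nat \<Rightarrow> nat \<Rightarrow> complex) \<Rightarrow> nat \<Rightarrow> nat \<Rightarrow> complex" where
  "identity_with_rows R \<rho> i = (if i \<in> R then \<rho> i else (\<lambda>j. if i = j then 1 else 0))"

lemma unipotent_lower_identity_with_rows:
  assumes "\<And>i. i \<in> R \<Longrightarrow> \<rho> i i = 1" "\<And>i j. i \<in> R \<Longrightarrow> j \<in> {1..n} \<Longrightarrow> i < j \<Longrightarrow> \<rho> i j = 0"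
  shows "unipotent_lower n (identity_with_rows R \<rho>)"
  using assms by (auto simp: unipotent_lower_def identity_with_rows_def)

lemma fst_act: "fst (act g4 g5 A k i j) = (\<Sum>l=1..4. g4 k l * bform (\<lambda>a b. fst (A l a b)) (g5 i) (g5 j))"
  unfolding act_def bform_def by simp

lemma act_row:
  assumes "\<And>l. l \<in> {1..4} \<Longrightarrow> g4 k l = c * p l"
  shows "act g4 g5 A k i j = (c * bform (evalA0 A p) (g5 i) (g5 j), c * bform (evalA1 A p) (g5 i) (g5 j))"
proof -
  have "(\<Sum>l=1..4. g4 k l * bform (X l) u w) = c * bform (\<lambda>a b. \<Sum>l=1..4. X l a b * p l) u w"
    for X u w
    using assms by (simp add: bform_sum_matrix sum_distrib_left mult.assoc)
  from this[of "\<lambda>l a b. fst (A l a b)"] this[of "\<lambda>l a b. snd (A l a b)"] show ?thesis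
    unfolding act_def bform_def evalA0_def evalA1_def red0_def by (simp add: prod_eq_iff)
qed

lemma normal_form_IJK_act:
  assumes A: "alternating_quad A" and row: "\<And>l. l \<in> {1..4} \<Longrightarrow> g4 K l = c * p l"
    and rows: "g5 I = r" "g5 J = s" and rs: "isotropic_kernel_pair A p r s"
  shows "normal_form_IJK (act g4 g5 A) I J K"
proof -
  have K: "act g4 g5 A K i j = (c * bform (evalA0 A p) (g5 i) (g5 j), c * bform (evalA1 A p) (g5 i) (g5 j))"
    for i j by (rule act_row) (rule row)
  show ?thesis
    using rs bform_kernel_left[OF skew5_evalA0[OF A]] bform_kernel_right
    unfolding normal_form_IJK_def isotropic_kernel_pair_def K fst_act rows
    by simp
qed

lemma row_through_point:
  assumes "\<exists>k\<in>{1..4}. p k \<noteq> 0"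
  obtains g4 K where "unipotent_lower 4 g4" "K \<in> {1..4}" "\<And>l. g4 K l = inverse (p K) * p l"
proof -
  obtain K where K: "K \<in> {1..4}" "p K \<noteq> 0" and K_last: "\<And>l. l \<in> {1..4} \<Longrightarrow> K < l \<Longrightarrow> p l = 0"
    using assms by (rule obtain_last_index) blast
  define g4 where "g4 = identity_with_rows {K} (\<lambda>_ l. inverse (p K) * p l)"
  have "unipotent_lower 4 g4"
    unfolding g4_def using K(2) K_last by (intro unipotent_lower_identity_with_rows) auto
  moreover have "g4 K l = inverse (p K) * p l" for l by (simp add: g4_def identity_with_rows_def)
  ultimately show thesis using K(1) that by blast
qed

lemma normal_form_K_act_identity:
  assumes row: "\<And>l. g4 K l = c * p l" and M0: "\<forall>i\<in>{1..5}. \<forall>j\<in>{1..5}. evalA0 A p i j = 0"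
  shows "normal_form_K (act g4 (identity_with_rows {} \<rho>) A) K"
  using M0 bform_unit_vectors[of _ _ "evalA0 A p"]
  by (simp add: normal_form_K_def act_row[of g4 K c p, OF row] identity_with_rows_def)

lemma normal_form_IJK_exists:
  assumes A: "alternating_quad A" and X: "on_X A p" and dim: "zariski_tangent_dim A p \<ge> 2"
    and ab: "a \<in> {1..5}" "b \<in> {1..5}" "evalA0 A p a b \<noteq> 0"
    and row: "\<And>l. g4 K l = c * p l"
  obtains g5 I J where "unipotent_lower 5 g5" "1 \<le> I" "I < J" "J \<le> 5"
    "normal_form_IJK (act g4 g5 A) I J K"
proof -
  obtain r s i j where rs: "isotropic_kernel_pair A p r s"
    and minor: "i \<in> {1..5}" "j \<in> {1..5}" "r i * s j - r j * s i \<noteq> 0"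
    by (rule isotropic_kernel_plane[OF A X dim ab])
  obtain I J x1 x2 y1 y2 where IJ: "1 \<le> I" "I < J" "J \<le> 5"
    "x1 * r I + x2 * s I = 1" "\<And>k. k \<in> {1..5} \<Longrightarrow> I < k \<Longrightarrow> x1 * r k + x2 * s k = 0"
    "y1 * r J + y2 * s J = 1" "\<And>k. k \<in> {1..5} \<Longrightarrow> J < k \<Longrightarrow> y1 * r k + y2 * s k = 0"
    using echelon_pair[OF minor] by blast
  define g5 where "g5 = identity_with_rows {I, J}
    (\<lambda>i. if i = I then (\<lambda>k. x1 * r k + x2 * s k) else (\<lambda>k. y1 * r k + y2 * s k))"
  have "unipotent_lower 5 g5"
    unfolding g5_def using IJ by (intro unipotent_lower_identity_with_rows) auto
  moreover have "normal_form_IJK (act g4 g5 A) I J K"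
  proof (rule normal_form_IJK_act[OF A])
    show "g4 K l = c * p l" for l by (rule row)
    show "g5 I = (\<lambda>k. x1 * r k + x2 * s k)" "g5 J = (\<lambda>k. y1 * r k + y2 * s k)"
      using IJ(2) by (auto simp: g5_def identity_with_rows_def)
    show "isotropic_kernel_pair A p (\<lambda>k. x1 * r k + x2 * s k) (\<lambda>k. y1 * r k + y2 * s k)"
      by (rule isotropic_kernel_pair_comb[OF A rs])
  qed
  ultimately show thesis using IJ(1-3) that by blast
qed

theorem lemma4p6:
  fixes A :: quadR and p :: "nat \<Rightarrow> complex"
  assumes "alternating_quad A"
    and "on_X A p"
    and "zariski_tangent_dim A p \<ge> 2"
  shows "\<exists>g4 g5. unipotent_lower 4 g4 \<and> unipotent_lower 5 g5 \<and>
           ((\<exists>K\<in>{1..4}. normal_form_K (act g4 g5 A) K) \<or>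
            (\<exists>I J K. 1 \<le> I \<and> I < J \<and> J \<le> 5 \<and> 1 \<le> K \<and> K \<le> 4 \<and>
                     normal_form_IJK (act g4 g5 A) I J K))"
proof -
  obtain g4 K where g4: "unipotent_lower 4 g4" and K: "K \<in> {1..4}"
    and row: "\<And>l. g4 K l = inverse (p K) * p l"
    using row_through_point assms(2) unfolding on_X_def by blast
  show ?thesis
  proof (cases "\<forall>i\<in>{1..5}. \<forall>j\<in>{1..5}. evalA0 A p i j = 0")
    case True
    let ?g5 = "identity_with_rows {} (\<lambda>_ _. 0)"
    have "unipotent_lower 5 ?g5" by (rule unipotent_lower_identity_with_rows) auto
    with g4 K normal_form_K_act_identity[of g4 K "inverse (p K)" p, OF row True] show ?thesis by blast
  next
    case False
    then obtain a b where "a \<in> {1..5}" "b \<in> {1..5}" "evalA0 A p a b \<noteq> 0" by blast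
    from normal_form_IJK_exists[OF assms this, of g4 K "inverse (p K)", OF row] obtain g5 I J where
      "unipotent_lower 5 g5" "1 \<le> I" "I < J" "J \<le> 5" "normal_form_IJK (act g4 g5 A) I J K" .
    with g4 K show ?thesis by (intro exI[of _ g4] exI[of _ g5]) auto
  qed
qed

end
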